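(* Assume (A-J). Let $f\in C^{0,1}(\mathbb{R})\cap C^1(\mathbb{R})$ with $\max_{\mathbb{R}}f'<\inf_\Omega\mathcal{J}^\delta$, and suppose $J\in\mathbb{B}^\alpha_{1,\infty}(\Omega;\delta)$ for some $\alpha\in(0,1)$. Let $t_0\in\mathbb{R}$, $u_0\in C^{0,\alpha}(\overline\Omega)$, and let $u\in C^2([t_0,\infty),C(\overline\Omega,[0,1]))$ be the unique solution of $\partial_tu=Lu+f(u)$ a.e. in $(t_0,\infty)\times\Omega$, $u(t_0,\cdot)=u_0$. Suppose $u$ is uniformly bounded by some constant $M_0>0$. Then there exists $M>0$, depending on $J$, $f'$, $M_0$, $[u_0]_{C^{0,\alpha}(\overline\Omega)}$, $\Omega$ and $\delta$, such that $$\sup_{t\ge t_0}\Big([u(t,\cdot)]_{C^{0,\alpha}(\overline\Omega)}+[\partial_tu(t,\cdot)]_{C^{0,\alpha}(\overline\Omega)}\Big)\le M.$$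
   Context: $K\subset\mathbb{R}^N$ is compact and $\Omega:=\mathbb{R}^N\setminus K$ is connected. A distance $\delta$ on $E\subset\mathbb{R}^N$ is quasi-Euclidean if $\delta(x,y)=|x-y|$ whenever $[x,y]\subset E$ and $\delta(x,y)\ge|x-y|$ for all $x,y\in E$; $\delta$ is a quasi-Euclidean distance on $\overline\Omega$. For measurable $J:[0,\infty)\to[0,\infty)$ with $|\mathrm{supp}(J)|>0$ and $x\in\overline\Omega$, $\Pi_0(J,x)=\{x\}$, $\Pi_{j+1}(J,x)=\bigcup_{z\in\Pi_j(J,x)}\mathrm{supp}(J(\delta(\cdot,z)))$; $(\Omega,\delta)$ has the $J$-covering property if $\overline\Omega=\bigcup_{j\ge0}\Pi_j(J,x)$ for all $x\in\overline\Omega$. Notation: $J_{\mathrm{rad}}(z)=J(|z|)$, $\mathcal{J}^\delta(x)=\int_\Omega J(\delta(x,z))dz$, $Lu(x)=\int_\Omega J(\delta(x,y))(u(y)-u(x))dy$; $[g]_{C^{0,\alpha}(E)}=\sup_{x\ne y\in E}|g(x)-g(y)|/|x-y|^\alpha$. (A-J): $J:[0,\infty)\to[0,\infty)$ measurable, compactly supported, $|\mathrm{supp}J|>0$; $(\Omega,\delta)$ has the $J$-covering property; $\int_{\mathbb{R}^N}J_{\mathrm{rad}}=1$; for every $y\in\overline\Omega$, $\|J(\delta(y,\cdot))-J(\delta(z,\cdot))\|_{L^1(\Omega)}\to0$ as $z\to y$; $\mathcal{J}^\delta\in L^\infty(\Omega)$. $\mathbb{B}^\alpha_{1,\infty}(\Omega;\delta)$: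 the set of $g:[0,\infty)\to\mathbb{R}$ with $g(|\cdot|)\in L^1(\mathbb{R}^N)$ and $\sup_{y\ne z\in\Omega}\|g(\delta(y,\cdot))-g(\delta(z,\cdot))\|_{L^1(\Omega)}/|y-z|^\alpha<\infty$. *)

theory Defs
  imports "HOL-Analysis.Analysis"
begin

definition is_distance_on :: "'a set \<Rightarrow> ('a \<Rightarrow> 'a \<Rightarrow> real) \<Rightarrow> bool" where
  "is_distance_on E \<delta> \<longleftrightarrow>
     (\<forall>x\<in>E. \<forall>y\<in>E. 0 \<le> \<delta> x y \<and> (\<delta> x y = 0 \<longleftrightarrow> x = y) \<and> \<delta> x y = \<delta> y x) \<and>
     (\<forall>x\<in>E. \<forall>y\<in>E. \<forall>z\<in>E. \<delta> x z \<le> \<delta> x y + \<delta> y z)"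

definition quasi_euclidean :: "'a::euclidean_space set \<Rightarrow> ('a \<Rightarrow> 'a \<Rightarrow> real) \<Rightarrow> bool" where
  "quasi_euclidean E \<delta> \<longleftrightarrow> is_distance_on E \<delta> \<and>
     (\<forall>x\<in>E. \<forall>y\<in>E. closed_segment x y \<subseteq> E \<longrightarrow> \<delta> x y = dist x y) \<and>
     (\<forall>x\<in>E. \<forall>y\<in>E. \<delta> x y \<ge> dist x y)"

definition supp_J :: "(real \<Rightarrow> real) \<Rightarrow> real set" where
  "supp_J J = closure {t. 0 \<le> t \<and> J t \<noteq> 0}"

definition supp_Jz :: "'a::euclidean_space set \<Rightarrow> (real \<Rightarrow> real) \<Rightarrow> ('a \<Rightarrow> 'a \<Rightarrow> real) \<Rightarrow> 'a \<Rightarrow> 'a set" where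
  "supp_Jz E J \<delta> z = closure {y\<in>E. J (\<delta> y z) \<noteq> 0}"

fun Pi_J :: "'a::euclidean_space set \<Rightarrow> (real \<Rightarrow> real) \<Rightarrow> ('a \<Rightarrow> 'a \<Rightarrow> real) \<Rightarrow> 'a \<Rightarrow> nat \<Rightarrow> 'a set" where
  "Pi_J E J \<delta> x 0 = {x}"
| "Pi_J E J \<delta> x (Suc j) = (\<Union>z\<in>Pi_J E J \<delta> x j. supp_Jz E J \<delta> z)"

definition J_covering :: "'a::euclidean_space set \<Rightarrow> (real \<Rightarrow> real) \<Rightarrow> ('a \<Rightarrow> 'a \<Rightarrow> real) \<Rightarrow> bool" where
  "J_covering \<Omega> J \<delta> \<longleftrightarrow> (\<forall>x\<in>closure \<Omega>. closure \<Omega> = (\<Union>j. Pi_J (closure \<Omega>) J \<delta> x j))"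

definition L1_diff :: "'a::euclidean_space set \<Rightarrow> (real \<Rightarrow> real) \<Rightarrow> ('a \<Rightarrow> 'a \<Rightarrow> real) \<Rightarrow> 'a \<Rightarrow> 'a \<Rightarrow> ennreal" where
  "L1_diff \<Omega> J \<delta> y z = (\<integral>\<^sup>+ w. ennreal (indicator \<Omega> w * \<bar>J (\<delta> y w) - J (\<delta> z w)\<bar>) \<partial>lborel)"

definition calJ_enn :: "'a::euclidean_space set \<Rightarrow> (real \<Rightarrow> real) \<Rightarrow> ('a \<Rightarrow> 'a \<Rightarrow> real) \<Rightarrow> 'a \<Rightarrow> ennreal" where
  "calJ_enn \<Omega> J \<delta> x = (\<integral>\<^sup>+ z. ennreal (indicator \<Omega> z * J (\<delta> x z)) \<partial>lborel)"

definition calJ :: "'a::euclidean_space set \<Rightarrow> (real \<Rightarrow> real) \<Rightarrow> ('a \<Rightarrow> 'a \<Rightarrow> real) \<Rightarrow> 'a \<Rightarrow> real" where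
  "calJ \<Omega> J \<delta> x = enn2real (calJ_enn \<Omega> J \<delta> x)"

definition assumption_AJ :: "'a::euclidean_space set \<Rightarrow> (real \<Rightarrow> real) \<Rightarrow> ('a \<Rightarrow> 'a \<Rightarrow> real) \<Rightarrow> bool" where
  "assumption_AJ (\<Omega>::'a set) J \<delta> \<longleftrightarrow>
     set_borel_measurable lebesgue {0..} J \<and>
     (\<forall>t\<ge>0. J t \<ge> 0) \<and>
     bounded {t. 0 \<le> t \<and> J t \<noteq> 0} \<and>
     emeasure lborel (supp_J J) > 0 \<and>
     J_covering \<Omega> J \<delta> \<and>
     integrable lborel (\<lambda>z::'a. J (norm z)) \<and> (\<integral>z. J (norm (z::'a)) \<partial>lborel) = 1 \<and>
     (\<forall>y\<in>closure \<Omega>. ((\<lambda>z. L1_diff \<Omega> J \<delta> y z) \<longlongrightarrow> 0) (at y within closure \<Omega>)) \<and>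
     (\<exists>C. AE x in lborel. x \<in> \<Omega> \<longrightarrow> calJ_enn \<Omega> J \<delta> x \<le> ennreal C)"

definition besov_B :: "real \<Rightarrow> 'a::euclidean_space set \<Rightarrow> ('a \<Rightarrow> 'a \<Rightarrow> real) \<Rightarrow> (real \<Rightarrow> real) \<Rightarrow> bool" where
  "besov_B \<alpha> (\<Omega>::'a set) \<delta> g \<longleftrightarrow> integrable lborel (\<lambda>z::'a. g (norm z)) \<and>
     (\<exists>C. \<forall>y\<in>\<Omega>. \<forall>z\<in>\<Omega>. y \<noteq> z \<longrightarrow> L1_diff \<Omega> g \<delta> y z \<le> ennreal (C * dist y z powr \<alpha>))"

definition holder_semi :: "real \<Rightarrow> 'a::metric_space set \<Rightarrow> ('a \<Rightarrow> real) \<Rightarrow> ereal" where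
  "holder_semi \<alpha> E g = (SUP p\<in>{(x, y). x \<in> E \<and> y \<in> E \<and> x \<noteq> y}.
       ereal (\<bar>g (fst p) - g (snd p)\<bar> / dist (fst p) (snd p) powr \<alpha>))"

definition holder_space :: "real \<Rightarrow> 'a::metric_space set \<Rightarrow> ('a \<Rightarrow> real) \<Rightarrow> bool" where
  "holder_space \<alpha> E g \<longleftrightarrow> bounded (g ` E) \<and> holder_semi \<alpha> E g < \<infinity>"

definition Cb :: "'a::metric_space set \<Rightarrow> ('a \<Rightarrow> real) \<Rightarrow> bool" where
  "Cb E g \<longleftrightarrow> continuous_on E g \<and> bounded (g ` E)"

definition sup_has_deriv :: "'a set \<Rightarrow> real \<Rightarrow> (real \<Rightarrow> 'a \<Rightarrow> real) \<Rightarrow> (real \<Rightarrow> 'a \<Rightarrow> real) \<Rightarrow> bool" where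
  "sup_has_deriv E t0 v v' \<longleftrightarrow> (\<forall>t\<ge>t0.
     ((\<lambda>s. (SUP x\<in>E. \<bar>v s x - v t x - (s - t) * v' t x\<bar>) / \<bar>s - t\<bar>) \<longlongrightarrow> 0) (at t within {t0..}))"

definition sup_continuous :: "'a set \<Rightarrow> real \<Rightarrow> (real \<Rightarrow> 'a \<Rightarrow> real) \<Rightarrow> bool" where
  "sup_continuous E t0 v \<longleftrightarrow> (\<forall>t\<ge>t0.
     ((\<lambda>s. SUP x\<in>E. \<bar>v s x - v t x\<bar>) \<longlongrightarrow> 0) (at t within {t0..}))"

definition C2_curve :: "'a::metric_space set \<Rightarrow> real \<Rightarrow> (real \<Rightarrow> 'a \<Rightarrow> real) \<Rightarrow> (real \<Rightarrow> 'a \<Rightarrow> real) \<Rightarrow> (real \<Rightarrow> 'a \<Rightarrow> real) \<Rightarrow> bool" where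
  "C2_curve E t0 u u1 u2 \<longleftrightarrow>
     (\<forall>t\<ge>t0. Cb E (u t) \<and> Cb E (u1 t) \<and> Cb E (u2 t) \<and> (\<forall>x\<in>E. u t x \<in> {0..1})) \<and>
     sup_has_deriv E t0 u u1 \<and> sup_has_deriv E t0 u1 u2 \<and> sup_continuous E t0 u2"

definition nl_op :: "'a::euclidean_space set \<Rightarrow> (real \<Rightarrow> real) \<Rightarrow> ('a \<Rightarrow> 'a \<Rightarrow> real) \<Rightarrow> ('a \<Rightarrow> real) \<Rightarrow> 'a \<Rightarrow> real" where
  "nl_op \<Omega> J \<delta> v x = (LINT y:\<Omega>|lborel. J (\<delta> x y) * (v y - v x))"

end

theory Submission
  imports Defs
begin

text \<open>Write \<open>L v = J * v - v \<cdot> calJ\<close>, where \<open>J * v\<close> is the kernel integral of \<open>v\<close>. The Besov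
  hypothesis makes \<open>J * v\<close> and \<open>calJ\<close> \<open>\<alpha>\<close>-Hoelder continuous with one constant \<open>C\<close>, uniformly
  for \<open>\<bar>v\<bar> \<le> 1\<close>. Subtracting the equation at two points \<open>x, y\<close>, the difference
  \<open>w t = u t x - u t y\<close> satisfies \<open>w \<cdot> w' \<le> \<bar>w\<bar> \<cdot> (2 C \<bar>x - y\<bar>\<^sup>\<alpha> - c \<bar>w\<bar>)\<close> with
  \<open>c = inf calJ - max f' > 0\<close>, so \<open>\<bar>w\<bar>\<close> never crosses the level \<open>(H + 2 C / c) \<bar>x - y\<bar>\<^sup>\<alpha>\<close>.
  Inserting this bound into the equation bounds \<open>\<partial>\<^sub>t u t x - \<partial>\<^sub>t u t y\<close>. The equation is only
  assumed almost everywhere; it holds everywhere because both sides are jointly continuous, and all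
  bounds pass from \<open>\<Omega>\<close> to its closure by continuity.\<close>

lemma AE_lborel_exists_near:
  fixes S :: "'b::euclidean_space set"
  assumes ae: "AE y in lborel. P y" and S: "open S" and x: "x \<in> S" and r: "r > 0"
  shows "\<exists>y\<in>S. dist x y < r \<and> P y"
proof (rule ccontr)
  assume none: "\<not> ?thesis"
  obtain r' where r': "r' > 0" "ball x r' \<subseteq> S" using S x open_contains_ball by blast
  define \<rho> where "\<rho> = min r r'"
  have \<rho>: "\<rho> > 0" "ball x \<rho> \<subseteq> S" "ball x \<rho> \<subseteq> ball x r" using r r' by (auto simp: \<rho>_def)
  from ae obtain N where N: "{y \<in> space lborel. \<not> P y} \<subseteq> N" "emeasure lborel N = 0" "N \<in> sets lborel"
    by (rule AE_E)
  have "ball x \<rho> \<subseteq> N" using none \<rho> N(1) by (fastforce simp: dist_commute)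
  then have "emeasure lborel (ball x \<rho>) = 0"
    using N(2,3) emeasure_mono[of "ball x \<rho>" N lborel] by simp
  with content_ball_pos[OF \<rho>(1), of x] show False by (simp add: measure_def)
qed

lemma continuous_on_le_if_AE_le:
  fixes S :: "'b::euclidean_space set"
  assumes ae: "AE y in lborel. y \<in> S \<longrightarrow> g y \<le> c" and S: "open S"
    and g: "continuous_on S (g :: _ \<Rightarrow> real)" and x: "x \<in> S"
  shows "g x \<le> c"
proof (rule ccontr)
  assume "\<not> g x \<le> c"
  with g x obtain d where d: "d > 0" "\<forall>y\<in>S. dist y x < d \<longrightarrow> dist (g y) (g x) < g x - c"
    unfolding continuous_on_iff by (meson diff_gt_0_iff_gt not_le)
  from AE_lborel_exists_near[OF ae S x d(1)] obtain y where "y \<in> S" "dist x y < d" "g y \<le> c"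
    by blast
  with d(2) show False by (auto simp: dist_commute dist_real_def)
qed

lemma radial_integrable_imp_borel_measurable_abs:
  fixes J :: "real \<Rightarrow> real"
  assumes "integrable lborel (\<lambda>z::'a::euclidean_space. J (norm z))"
  shows "(\<lambda>t. J \<bar>t\<bar>) \<in> borel_measurable borel"
proof -
  obtain e :: 'a where e: "e \<in> Basis" using nonempty_Basis by blast
  have "(\<lambda>z::'a. J (norm z)) \<in> borel_measurable borel"
    using borel_measurable_integrable[OF assms] by simp
  moreover have "(\<lambda>t::real. t *\<^sub>R e) \<in> borel_measurable borel" by measurable
  ultimately have "(\<lambda>t::real. J (norm (t *\<^sub>R e))) \<in> borel_measurable borel"
    using measurable_compose by blast
  then show ?thesis using e by simp
qed

lemma holder_imp_continuous_on:
  fixes g :: "'b::metric_space \<Rightarrow> real"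
  assumes h: "\<And>x y. x \<in> S \<Longrightarrow> y \<in> S \<Longrightarrow> \<bar>g x - g y\<bar> \<le> H * dist x y powr \<alpha>" and \<alpha>: "\<alpha> > 0"
  shows "continuous_on S g"
  unfolding continuous_on_def
proof
  fix x assume x: "x \<in> S"
  have "((\<lambda>y. dist y x) \<longlongrightarrow> 0) (at x within S)"
    using tendsto_dist[OF tendsto_ident_at[of x S] tendsto_const[of x]] by simp
  then have "((\<lambda>y. dist y x powr \<alpha>) \<longlongrightarrow> 0) (at x within S)"
    by (rule tendsto_zero_powrI) (use \<alpha> in auto)
  then have "((\<lambda>y. H * dist y x powr \<alpha>) \<longlongrightarrow> 0) (at x within S)"
    using tendsto_mult_right_zero by blast
  then have "((\<lambda>y. g y - g x) \<longlongrightarrow> 0) (at x within S)"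
    by (rule Lim_null_comparison[rotated])
      (use x in \<open>auto simp: eventually_at_filter intro!: always_eventually h\<close>)
  then show "(g \<longlongrightarrow> g x) (at x within S)" by (rule LIM_zero_cancel)
qed

lemma holder_semi_leD:
  assumes "holder_semi \<alpha> E g \<le> ereal H" "x \<in> E" "y \<in> E"
  shows "\<bar>g x - g y\<bar> \<le> H * dist x y powr \<alpha>"
proof (cases "x = y")
  case False
  have "(x, y) \<in> {(x, y). x \<in> E \<and> y \<in> E \<and> x \<noteq> y}" using assms(2,3) False by simp
  then have "ereal (\<bar>g x - g y\<bar> / dist x y powr \<alpha>) \<le> holder_semi \<alpha> E g"
    unfolding holder_semi_def by (metis (no_types, lifting) SUP_upper fst_conv snd_conv)
  with assms(1) have "\<bar>g x - g y\<bar> / dist x y powr \<alpha> \<le> H"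
    using order_trans ereal_less_eq(3) by blast
  moreover have "dist x y powr \<alpha> > 0" using False by simp
  ultimately show ?thesis by (simp add: pos_divide_le_eq)
qed simp

lemma holder_semi_closure_le:
  fixes g :: "'b::metric_space \<Rightarrow> real"
  assumes g: "continuous_on (closure S) g"
    and h: "\<And>x y. x \<in> S \<Longrightarrow> y \<in> S \<Longrightarrow> \<bar>g x - g y\<bar> \<le> H * dist x y powr \<alpha>"
    and \<alpha>: "\<alpha> > 0"
  shows "holder_semi \<alpha> (closure S) g \<le> ereal H"
proof -
  have defect_cont: "continuous_on (closure S) (\<lambda>x. \<bar>g x - g y\<bar> - H * dist x y powr \<alpha>)"
    "continuous_on (closure S) (\<lambda>y. \<bar>g x - g y\<bar> - H * dist x y powr \<alpha>)" for x y
    by (intro continuous_intros g continuous_on_powr'; use \<alpha> in simp)+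
  have "\<bar>g x - g y\<bar> - H * dist x y powr \<alpha> \<le> 0" if "x \<in> closure S" "y \<in> S" for x y
    by (rule continuous_le_on_closure[OF defect_cont(1) that(1)]) (use h that(2) in auto)
  then have bound: "\<bar>g x - g y\<bar> \<le> H * dist x y powr \<alpha>" if "x \<in> closure S" "y \<in> closure S" for x y
    using continuous_le_on_closure[OF defect_cont(2) that(2)] that(1) by fastforce
  show ?thesis
    unfolding holder_semi_def
    by (rule SUP_least) (auto simp: pos_divide_le_eq bound)
qed

lemma real_mvt_segment:
  fixes f f' :: "real \<Rightarrow> real"
  assumes "\<And>s. (f has_real_derivative f' s) (at s)"
  shows "\<exists>z\<in>closed_segment a b. f a - f b = f' z * (a - b)"
proof -
  consider "a = b" | "a < b" | "b < a" by linarith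
  then show ?thesis
  proof cases
    case 2
    with MVT2[OF 2, of f f'] assms obtain z where "a < z" "z < b" "f b - f a = (b - a) * f' z"
      by blast
    then show ?thesis by (intro bexI[of _ z]) (auto simp: closed_segment_eq_real_ivl algebra_simps)
  next
    case 3
    with MVT2[OF 3, of f f'] assms obtain z where "b < z" "z < a" "f a - f b = (a - b) * f' z"
      by blast
    then show ?thesis by (intro bexI[of _ z]) (auto simp: closed_segment_eq_real_ivl algebra_simps)
  qed simp
qed

text \<open>At the last time \<open>s \<le> t1\<close> with \<open>\<bar>w s\<bar> \<le> m\<close>, the square \<open>w\<^sup>2\<close> starts to decrease
  and stays decreasing up to \<open>t1\<close>, so \<open>\<bar>w t1\<bar> \<le> \<bar>w s\<bar>\<close>.\<close>
lemma abs_le_barrier: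
  fixes w w' :: "real \<Rightarrow> real"
  assumes deriv: "\<And>t. t \<ge> t0 \<Longrightarrow> (w has_real_derivative w' t) (at t within {t0..})"
    and inward: "\<And>t. t > t0 \<Longrightarrow> m < \<bar>w t\<bar> \<Longrightarrow> w t * w' t < 0"
    and init: "\<bar>w t0\<bar> \<le> m" and t1: "t1 \<ge> t0"
  shows "\<bar>w t1\<bar> \<le> m"
proof (rule ccontr)
  assume escaped: "\<not> \<bar>w t1\<bar> \<le> m"
  have cont: "continuous_on {t0..t1} w"
    by (rule DERIV_continuous_on[where D=w'], rule DERIV_subset[OF deriv]) auto
  define S where "S = {t\<in>{t0..t1}. \<bar>w t\<bar> \<le> m}"
  have "closed S" unfolding S_def
    by (intro continuous_on_closed_Collect_le continuous_intros cont)
  moreover have "bounded S" by (rule bounded_subset[of "{t0..t1}"]) (auto simp: S_def)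
  ultimately have "compact S" by (simp add: compact_eq_bounded_closed)
  moreover have "t0 \<in> S" using init t1 by (simp add: S_def)
  ultimately obtain s where s: "s \<in> S" "\<And>t. t \<in> S \<Longrightarrow> t \<le> s"
    using compact_attains_sup by (metis empty_iff)
  have st: "t0 \<le> s" "s < t1" using s(1) escaped by (auto simp: S_def order.order_iff_strict)
  have outside: "m < \<bar>w t\<bar>" if "s < t" "t \<le> t1" for t
    using s(2)[of t] that st unfolding S_def by fastforce
  have sq_deriv: "((\<lambda>t. w t * w t) has_real_derivative 2 * (w t * w' t)) (at t)" if "t0 < t" for t
  proof -
    have "(w has_real_derivative w' t) (at t within {t0<..})"
      using deriv[of t] that by (auto intro: DERIV_subset)
    then have "(w has_real_derivative w' t) (at t)"
      using that by (simp add: at_within_open[of t "{t0<..}"])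
    from DERIV_mult[OF this this] show ?thesis by (simp add: algebra_simps)
  qed
  obtain l z where z: "s < z" "z < t1" "((\<lambda>t. w t * w t) has_real_derivative l) (at z)"
      "w t1 * w t1 - w s * w s = (t1 - s) * l"
  proof (rule MVT[OF st(2), of "\<lambda>t. w t * w t", THEN exE])
    show "continuous_on {s..t1} (\<lambda>t. w t * w t)"
      by (intro continuous_intros continuous_on_subset[OF cont]) (use st in auto)
    show "(\<lambda>t. w t * w t) differentiable (at t)" if "s < t" "t < t1" for t
      using sq_deriv[of t] that st unfolding real_differentiable_def by auto
  qed (use that in blast)
  have "l = 2 * (w z * w' z)" using DERIV_unique[OF z(3) sq_deriv] z st by auto
  then have "l < 0" using inward[of z] outside[of z] z st by auto
  then have "(t1 - s) * l < 0" using z(1,2) by (simp add: mult_pos_neg)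
  then have "w t1 * w t1 < w s * w s" using z(4) by simp
  moreover have "\<bar>w s\<bar> * \<bar>w s\<bar> \<le> m * m" using s(1) by (intro mult_mono) (auto simp: S_def)
  moreover have "m * m < \<bar>w t1\<bar> * \<bar>w t1\<bar>" using escaped init by (intro mult_strict_mono) auto
  ultimately show False by (simp add: abs_mult[symmetric])
qed

definition locally_time_lipschitz :: "real \<Rightarrow> 'b set \<Rightarrow> (real \<Rightarrow> 'b \<Rightarrow> real) \<Rightarrow> bool" where
  "locally_time_lipschitz t0 S v \<longleftrightarrow> (\<forall>t\<ge>t0. \<exists>d>0. \<exists>B. \<forall>s\<ge>t0. \<bar>s - t\<bar> < d \<longrightarrow>
     (\<forall>x\<in>S. \<bar>v s x - v t x\<bar> \<le> B * \<bar>s - t\<bar>))"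

lemma locally_time_lipschitz_subset:
  "locally_time_lipschitz t0 E v \<Longrightarrow> S \<subseteq> E \<Longrightarrow> locally_time_lipschitz t0 S v"
  unfolding locally_time_lipschitz_def by (meson subsetD)

lemma sup_has_deriv_remainder_le:
  fixes v v' :: "real \<Rightarrow> 'b \<Rightarrow> real"
  assumes bounded: "\<And>t. t \<ge> t0 \<Longrightarrow> bounded (v t ` E) \<and> bounded (v' t ` E)"
    and "t \<ge> t0" "s \<ge> t0" "x \<in> E"
  shows "\<bar>v s x - v t x - (s - t) * v' t x\<bar> \<le> (SUP y\<in>E. \<bar>v s y - v t y - (s - t) * v' t y\<bar>)"
proof -
  have "bounded ((\<lambda>y. (s - t) * v' t y) ` E)"
    using bounded_scaling[of "v' t ` E" "s - t"] bounded \<open>t \<ge> t0\<close> by (simp add: image_image)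
  then have "bounded ((\<lambda>y. v s y - v t y - (s - t) * v' t y) ` E)"
    using bounded assms(2,3) by (intro bounded_minus_comp) auto
  then have "bounded ((\<lambda>y. \<bar>v s y - v t y - (s - t) * v' t y\<bar>) ` E)"
    using bounded_norm_comp[where f="\<lambda>y. v s y - v t y - (s - t) * v' t y" and S=E] by simp
  from cSUP_upper[OF \<open>x \<in> E\<close> bounded_imp_bdd_above[OF this]] show ?thesis .
qed

lemma sup_has_deriv_imp_has_real_derivative:
  assumes deriv: "sup_has_deriv E t0 v v'"
    and bounded: "\<And>t. t \<ge> t0 \<Longrightarrow> bounded (v t ` E) \<and> bounded (v' t ` E)"
    and t: "t \<ge> t0" and x: "x \<in> E"
  shows "((\<lambda>s. v s x) has_real_derivative v' t x) (at t within {t0..})"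
proof -
  let ?Q = "\<lambda>s. SUP y\<in>E. \<bar>v s y - v t y - (s - t) * v' t y\<bar>"
  have "((\<lambda>s. ?Q s / \<bar>s - t\<bar>) \<longlongrightarrow> 0) (at t within {t0..})"
    using deriv t unfolding sup_has_deriv_def by blast
  moreover have "\<forall>\<^sub>F s in at t within {t0..}.
      norm ((v s x - v t x) / (s - t) - v' t x) \<le> ?Q s / \<bar>s - t\<bar>"
    unfolding eventually_at_filter
  proof (intro always_eventually allI impI)
    fix s assume s: "s \<noteq> t" "s \<in> {t0..}"
    then have "norm ((v s x - v t x) / (s - t) - v' t x) = \<bar>v s x - v t x - (s - t) * v' t x\<bar> / \<bar>s - t\<bar>"
      by (simp add: field_simps abs_divide)
    also have "\<dots> \<le> ?Q s / \<bar>s - t\<bar>"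
      using sup_has_deriv_remainder_le[OF bounded t _ x, where s=s] s by (intro divide_right_mono) auto
    finally show "norm ((v s x - v t x) / (s - t) - v' t x) \<le> ?Q s / \<bar>s - t\<bar>" .
  qed
  ultimately have "((\<lambda>s. (v s x - v t x) / (s - t) - v' t x) \<longlongrightarrow> 0) (at t within {t0..})"
    by (rule Lim_null_comparison[rotated])
  then show ?thesis unfolding has_field_derivative_iff by (rule LIM_zero_cancel)
qed

lemma sup_has_deriv_imp_locally_time_lipschitz:
  assumes deriv: "sup_has_deriv E t0 v v'"
    and bounded: "\<And>t. t \<ge> t0 \<Longrightarrow> bounded (v t ` E) \<and> bounded (v' t ` E)"
  shows "locally_time_lipschitz t0 E v"
  unfolding locally_time_lipschitz_def
proof (intro allI impI)
  fix t assume t: "t \<ge> t0"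
  let ?Q = "\<lambda>s. SUP y\<in>E. \<bar>v s y - v t y - (s - t) * v' t y\<bar>"
  obtain b where b: "\<And>x. x \<in> E \<Longrightarrow> \<bar>v' t x\<bar> \<le> b"
    using bounded[OF t] unfolding bounded_real by blast
  have "((\<lambda>s. ?Q s / \<bar>s - t\<bar>) \<longlongrightarrow> 0) (at t within {t0..})"
    using deriv t unfolding sup_has_deriv_def by blast
  then have "\<forall>\<^sub>F s in at t within {t0..}. ?Q s / \<bar>s - t\<bar> < 1"
    by (rule order_tendstoD) simp
  then obtain d where d: "d > 0" "\<And>s. s \<in> {t0..} \<Longrightarrow> s \<noteq> t \<Longrightarrow> dist s t < d \<Longrightarrow> ?Q s / \<bar>s - t\<bar> < 1"
    unfolding eventually_at by blast
  have "\<bar>v s x - v t x\<bar> \<le> (1 + b) * \<bar>s - t\<bar>" if s: "s \<ge> t0" "\<bar>s - t\<bar> < d" and x: "x \<in> E" for s x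
  proof (cases "s = t")
    case False
    then have "?Q s < \<bar>s - t\<bar>" using d(2)[of s] s by (simp add: dist_real_def)
    moreover have "\<bar>v s x - v t x - (s - t) * v' t x\<bar> \<le> ?Q s"
      by (rule sup_has_deriv_remainder_le[OF bounded t s(1) x])
    moreover have "\<bar>(s - t) * v' t x\<bar> \<le> \<bar>s - t\<bar> * b"
      using b[OF x] by (simp add: abs_mult mult_left_mono)
    ultimately show ?thesis by (simp add: algebra_simps abs_triangle_ineq4)
  qed simp
  with d(1) show "\<exists>d>0. \<exists>B. \<forall>s\<ge>t0. \<bar>s - t\<bar> < d \<longrightarrow> (\<forall>x\<in>E. \<bar>v s x - v t x\<bar> \<le> B * \<bar>s - t\<bar>)"
    by blast
qed

lemma continuous_on_Times_if_locally_time_lipschitz: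
  fixes v :: "real \<Rightarrow> 'b::metric_space \<Rightarrow> real"
  assumes cont: "\<And>t. t \<ge> t0 \<Longrightarrow> continuous_on S (v t)"
    and lip: "locally_time_lipschitz t0 S v"
  shows "continuous_on ({t0..} \<times> S) (\<lambda>p. v (fst p) (snd p))"
  unfolding continuous_on_iff
proof (intro ballI allI impI)
  fix p and e :: real assume p: "p \<in> {t0..} \<times> S" and e: "0 < e"
  obtain t x where tx: "p = (t, x)" "t \<ge> t0" "x \<in> S" using p by auto
  obtain d1 B where d1: "d1 > 0" "\<And>s y. s \<ge> t0 \<Longrightarrow> \<bar>s - t\<bar> < d1 \<Longrightarrow> y \<in> S \<Longrightarrow> \<bar>v s y - v t y\<bar> \<le> B * \<bar>s - t\<bar>"
    using lip tx(2) unfolding locally_time_lipschitz_def by blast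
  obtain d2 where d2: "d2 > 0" "\<And>y. y \<in> S \<Longrightarrow> dist y x < d2 \<Longrightarrow> \<bar>v t y - v t x\<bar> < e / 2"
    using cont[OF tx(2)] tx(3) e unfolding continuous_on_iff dist_real_def by (meson half_gt_zero)
  define d where "d = min d1 (min d2 (e / (2 * (\<bar>B\<bar> + 1))))"
  show "\<exists>d>0. \<forall>q\<in>{t0..} \<times> S. dist q p < d \<longrightarrow> dist (v (fst q) (snd q)) (v (fst p) (snd p)) < e"
  proof (intro exI[of _ d] conjI ballI impI)
    show "d > 0" using d1 d2 e by (simp add: d_def)
    fix q assume q: "q \<in> {t0..} \<times> S" and dq: "dist q p < d"
    obtain s y where sy: "q = (s, y)" "s \<ge> t0" "y \<in> S" using q by auto
    have ds: "\<bar>s - t\<bar> < d" using dist_fst_le[of q p] dq sy tx by (simp add: dist_real_def)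
    have dy: "dist y x < d" using dist_snd_le[of q p] dq sy tx by simp
    have "\<bar>B\<bar> * \<bar>s - t\<bar> \<le> \<bar>B\<bar> * (e / (2 * (\<bar>B\<bar> + 1)))"
      using ds by (intro mult_left_mono) (auto simp: d_def)
    also have "\<dots> < e / 2" using e by (simp add: field_simps)
    finally have "\<bar>v s y - v t y\<bar> < e / 2"
      using d1(2)[OF sy(2) _ sy(3)] ds abs_ge_self[of B] mult_right_mono[of B "\<bar>B\<bar>" "\<bar>s - t\<bar>"]
      by (fastforce simp: d_def)
    moreover have "\<bar>v t y - v t x\<bar> < e / 2" using d2(2)[OF sy(3)] dy by (simp add: d_def)
    ultimately have "\<bar>v s y - v t x\<bar> < e" by linarith
    then show "dist (v (fst q) (snd q)) (v (fst p) (snd p)) < e"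
      using sy tx by (simp add: dist_real_def)
  qed
qed

definition kernel_integral ::
    "'a::euclidean_space set \<Rightarrow> (real \<Rightarrow> real) \<Rightarrow> ('a \<Rightarrow> 'a \<Rightarrow> real) \<Rightarrow> ('a \<Rightarrow> real) \<Rightarrow> 'a \<Rightarrow> real" where
  "kernel_integral \<Omega> J \<delta> v x = (\<integral>z. indicator \<Omega> z * J (\<delta> x z) * v z \<partial>lborel)"

lemma calJ_nonneg: "0 \<le> calJ \<Omega> J \<delta> x"
  by (simp add: calJ_def)

locale besov_kernel =
  fixes \<Omega> :: "'a::euclidean_space set" and J :: "real \<Rightarrow> real" and \<delta> :: "'a \<Rightarrow> 'a \<Rightarrow> real"
    and \<alpha> C CJ :: real
  assumes open_domain: "open \<Omega>"
    and quasi_euclidean_distance: "quasi_euclidean (closure \<Omega>) \<delta>"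
    and J_abs_measurable: "(\<lambda>t. J \<bar>t\<bar>) \<in> borel_measurable borel"
    and J_nonneg: "\<And>t. 0 \<le> t \<Longrightarrow> 0 \<le> J t"
    and L1_diff_le: "\<And>y z. y \<in> \<Omega> \<Longrightarrow> z \<in> \<Omega> \<Longrightarrow> L1_diff \<Omega> J \<delta> y z \<le> ennreal (C * dist y z powr \<alpha>)"
    and C_nonneg: "0 \<le> C" and alpha_pos: "0 < \<alpha>"
    and calJ_enn_AE_le: "AE x in lborel. x \<in> \<Omega> \<longrightarrow> calJ_enn \<Omega> J \<delta> x \<le> ennreal CJ"
    and CJ_nonneg: "0 \<le> CJ"
begin

lemma delta_nonneg: "x \<in> closure \<Omega> \<Longrightarrow> y \<in> closure \<Omega> \<Longrightarrow> 0 \<le> \<delta> x y"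
  and delta_commute: "x \<in> closure \<Omega> \<Longrightarrow> y \<in> closure \<Omega> \<Longrightarrow> \<delta> x y = \<delta> y x"
  and delta_triangle: "x \<in> closure \<Omega> \<Longrightarrow> y \<in> closure \<Omega> \<Longrightarrow> z \<in> closure \<Omega> \<Longrightarrow> \<delta> x z \<le> \<delta> x y + \<delta> y z"
  and delta_eq_dist: "x \<in> closure \<Omega> \<Longrightarrow> y \<in> closure \<Omega> \<Longrightarrow> closed_segment x y \<subseteq> closure \<Omega> \<Longrightarrow> \<delta> x y = dist x y"
  using quasi_euclidean_distance unfolding quasi_euclidean_def is_distance_on_def by blast+

lemma continuous_on_delta:
  assumes x: "x \<in> closure \<Omega>"
  shows "continuous_on \<Omega> (\<delta> x)"
  unfolding continuous_on_iff
proof (intro ballI allI impI)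
  fix z and e :: real assume z: "z \<in> \<Omega>" and e: "0 < e"
  obtain r where r: "r > 0" "ball z r \<subseteq> \<Omega>" using open_domain z open_contains_ball by blast
  show "\<exists>d>0. \<forall>z'\<in>\<Omega>. dist z' z < d \<longrightarrow> dist (\<delta> x z') (\<delta> x z) < e"
  proof (intro exI[of _ "min r e"] conjI ballI impI)
    show "min r e > 0" using r e by simp
    fix z' assume z': "z' \<in> \<Omega>" and dz: "dist z' z < min r e"
    have "closed_segment z z' \<subseteq> ball z r"
      using dz r(1) by (intro closed_segment_subset) (auto simp: dist_commute)
    then have seg: "closed_segment z z' \<subseteq> closure \<Omega>" using r(2) closure_subset by blast
    have zs: "z \<in> closure \<Omega>" "z' \<in> closure \<Omega>" using z z' closure_subset by auto
    have "\<delta> z z' = dist z z'" using delta_eq_dist[OF zs seg] .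
    moreover have "\<delta> z' z = dist z z'" using calculation delta_commute[OF zs] by simp
    moreover have "\<delta> x z' \<le> \<delta> x z + \<delta> z z'" "\<delta> x z \<le> \<delta> x z' + \<delta> z' z"
      using delta_triangle x zs by auto
    moreover have "dist z' z < e" using dz by simp
    ultimately show "dist (\<delta> x z') (\<delta> x z) < e"
      unfolding dist_real_def using dist_commute[of z' z] by linarith
  qed
qed

lemma kernel_nonneg: "x \<in> closure \<Omega> \<Longrightarrow> 0 \<le> indicator \<Omega> z * J (\<delta> x z)"
  using delta_nonneg[of x z] J_nonneg closure_subset[of \<Omega>] by (cases "z \<in> \<Omega>") auto

lemma borel_measurable_restrict:
  "continuous_on \<Omega> g \<Longrightarrow> (\<lambda>z. indicator \<Omega> z * (g z :: real)) \<in> borel_measurable lborel"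
  using borel_measurable_continuous_on_indicator[of \<Omega> g] open_domain by simp

lemma kernel_measurable:
  assumes x: "x \<in> closure \<Omega>"
  shows "(\<lambda>z. indicator \<Omega> z * J (\<delta> x z)) \<in> borel_measurable lborel"
proof -
  have "(\<lambda>z. indicator \<Omega> z * \<delta> x z) \<in> borel_measurable borel"
    using borel_measurable_restrict[OF continuous_on_delta[OF x]] by simp
  from measurable_compose[OF this J_abs_measurable]
  have "(\<lambda>z. indicator \<Omega> z * J \<bar>indicator \<Omega> z * \<delta> x z\<bar>) \<in> borel_measurable borel"
    by (intro borel_measurable_times borel_measurable_indicator borel_open open_domain) simp
  moreover have "indicator \<Omega> z * J \<bar>indicator \<Omega> z * \<delta> x z\<bar> = indicator \<Omega> z * J (\<delta> x z)" for z
    using delta_nonneg[OF x, of z] closure_subset[of \<Omega>] by (cases "z \<in> \<Omega>") auto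
  ultimately show ?thesis by simp
qed

lemma kernel_times_measurable:
  assumes "x \<in> closure \<Omega>" "continuous_on \<Omega> v"
  shows "(\<lambda>z. indicator \<Omega> z * J (\<delta> x z) * v z) \<in> borel_measurable lborel"
proof -
  have "(\<lambda>z. (indicator \<Omega> z * J (\<delta> x z)) * (indicator \<Omega> z * v z)) \<in> borel_measurable lborel"
    using kernel_measurable[OF assms(1)] borel_measurable_restrict[OF assms(2)]
    by (rule borel_measurable_times)
  moreover have "(indicator \<Omega> z * J (\<delta> x z)) * (indicator \<Omega> z * v z) = indicator \<Omega> z * J (\<delta> x z) * v z" for z
    by (simp add: indicator_def)
  ultimately show ?thesis by simp
qed

lemma calJ_enn_le_add_L1_diff:
  assumes x: "x \<in> closure \<Omega>" and y: "y \<in> closure \<Omega>"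
  shows "calJ_enn \<Omega> J \<delta> x \<le> calJ_enn \<Omega> J \<delta> y + L1_diff \<Omega> J \<delta> x y"
proof -
  let ?k = "\<lambda>x z. indicator \<Omega> z * J (\<delta> x z)"
  have "(\<lambda>z. \<bar>?k x z - ?k y z\<bar>) \<in> borel_measurable lborel"
    using kernel_measurable[OF x] kernel_measurable[OF y]
    by (intro borel_measurable_abs borel_measurable_diff)
  moreover have "\<bar>?k x z - ?k y z\<bar> = indicator \<Omega> z * \<bar>J (\<delta> x z) - J (\<delta> y z)\<bar>" for z
    by (simp add: indicator_def)
  ultimately have diff_meas: "(\<lambda>z. indicator \<Omega> z * \<bar>J (\<delta> x z) - J (\<delta> y z)\<bar>) \<in> borel_measurable lborel"
    by simp
  have "calJ_enn \<Omega> J \<delta> x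
      \<le> (\<integral>\<^sup>+ z. ennreal (?k y z) + ennreal (indicator \<Omega> z * \<bar>J (\<delta> x z) - J (\<delta> y z)\<bar>) \<partial>lborel)"
    unfolding calJ_enn_def
  proof (intro nn_integral_mono)
    fix z
    have "?k x z \<le> ?k y z + indicator \<Omega> z * \<bar>J (\<delta> x z) - J (\<delta> y z)\<bar>"
      using abs_ge_self[of "J (\<delta> x z) - J (\<delta> y z)"] by (simp add: indicator_def)
    then show "ennreal (?k x z) \<le> ennreal (?k y z) + ennreal (indicator \<Omega> z * \<bar>J (\<delta> x z) - J (\<delta> y z)\<bar>)"
      using kernel_nonneg[OF y] by (metis ennreal_leI ennreal_plus abs_ge_zero indicator_pos_le
          zero_le_mult_iff)
  qed
  also have "\<dots> = calJ_enn \<Omega> J \<delta> y + L1_diff \<Omega> J \<delta> x y"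
    unfolding calJ_enn_def L1_diff_def
    using kernel_measurable[OF y] diff_meas by (intro nn_integral_add) auto
  finally show ?thesis .
qed

text \<open>The bound \<open>CJ\<close> is only known almost everywhere; a nearby point where it holds and the
  Besov estimate of \<open>L1_diff\<close> give finiteness everywhere.\<close>
lemma calJ_enn_finite:
  assumes x: "x \<in> \<Omega>"
  shows "calJ_enn \<Omega> J \<delta> x < \<infinity>"
proof -
  obtain y where y: "y \<in> \<Omega>" "calJ_enn \<Omega> J \<delta> y \<le> ennreal CJ"
    using AE_lborel_exists_near[OF calJ_enn_AE_le open_domain x zero_less_one] by auto
  have "calJ_enn \<Omega> J \<delta> x \<le> calJ_enn \<Omega> J \<delta> y + L1_diff \<Omega> J \<delta> x y"
    using calJ_enn_le_add_L1_diff x y(1) closure_subset by blast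
  also have "\<dots> \<le> ennreal CJ + ennreal (C * dist x y powr \<alpha>)"
    using y L1_diff_le[OF x y(1)] by (intro add_mono)
  finally show ?thesis by (simp add: order_le_less_trans)
qed

lemma kernel_integrable:
  assumes x: "x \<in> \<Omega>"
  shows "integrable lborel (\<lambda>z. indicator \<Omega> z * J (\<delta> x z))"
proof (rule integrableI_nonneg)
  have "x \<in> closure \<Omega>" using x closure_subset by blast
  then show "(\<lambda>z. indicator \<Omega> z * J (\<delta> x z)) \<in> borel_measurable lborel"
    and "AE z in lborel. 0 \<le> indicator \<Omega> z * J (\<delta> x z)"
    by (rule kernel_measurable, intro AE_I2 kernel_nonneg)
  show "(\<integral>\<^sup>+ z. ennreal (indicator \<Omega> z * J (\<delta> x z)) \<partial>lborel) < \<infinity>"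
    using calJ_enn_finite[OF x] unfolding calJ_enn_def .
qed

lemma calJ_eq_kernel_integral:
  assumes x: "x \<in> \<Omega>"
  shows "calJ \<Omega> J \<delta> x = kernel_integral \<Omega> J \<delta> (\<lambda>_. 1) x"
proof -
  have "x \<in> closure \<Omega>" using x closure_subset by blast
  then show ?thesis
    unfolding calJ_def calJ_enn_def kernel_integral_def
    by (simp add: integral_eq_nn_integral[OF kernel_measurable AE_I2[OF kernel_nonneg]])
qed

lemma kernel_times_integrable:
  assumes x: "x \<in> \<Omega>" and v: "continuous_on \<Omega> v" and bound: "\<And>z. z \<in> \<Omega> \<Longrightarrow> \<bar>v z\<bar> \<le> b"
  shows "integrable lborel (\<lambda>z. indicator \<Omega> z * J (\<delta> x z) * v z)"
proof (rule Bochner_Integration.integrable_bound)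
  show "integrable lborel (\<lambda>z. b * (indicator \<Omega> z * J (\<delta> x z)))"
    using kernel_integrable[OF x] by simp
  show "(\<lambda>z. indicator \<Omega> z * J (\<delta> x z) * v z) \<in> borel_measurable lborel"
    using kernel_times_measurable[OF _ v] x closure_subset by blast
  show "AE z in lborel. norm (indicator \<Omega> z * J (\<delta> x z) * v z) \<le> norm (b * (indicator \<Omega> z * J (\<delta> x z)))"
  proof (intro AE_I2)
    fix z
    have k: "0 \<le> indicator \<Omega> z * J (\<delta> x z)" using kernel_nonneg x closure_subset by blast
    show "norm (indicator \<Omega> z * J (\<delta> x z) * v z) \<le> norm (b * (indicator \<Omega> z * J (\<delta> x z)))"
    proof (cases "z \<in> \<Omega>")
      case True
      then show ?thesis
        using bound[OF True] k by (auto simp: abs_mult mult.commute intro: mult_right_mono)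
    qed simp
  qed
qed

lemma kernel_integral_diff:
  assumes x: "x \<in> \<Omega>" and v: "continuous_on \<Omega> v" "\<And>z. z \<in> \<Omega> \<Longrightarrow> \<bar>v z\<bar> \<le> b"
    and w: "continuous_on \<Omega> w" "\<And>z. z \<in> \<Omega> \<Longrightarrow> \<bar>w z\<bar> \<le> b"
  shows "kernel_integral \<Omega> J \<delta> v x - kernel_integral \<Omega> J \<delta> w x
    = kernel_integral \<Omega> J \<delta> (\<lambda>z. v z - w z) x"
proof -
  have "integrable lborel (\<lambda>z. indicator \<Omega> z * J (\<delta> x z) * v z)"
    "integrable lborel (\<lambda>z. indicator \<Omega> z * J (\<delta> x z) * w z)"
    using x v w by (auto intro: kernel_times_integrable)
  then show ?thesis
    unfolding kernel_integral_def right_diff_distrib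
    by (rule Bochner_Integration.integral_diff[symmetric])
qed

lemma kernel_integral_abs_le:
  assumes x: "x \<in> \<Omega>" and v: "continuous_on \<Omega> v" and bound: "\<And>z. z \<in> \<Omega> \<Longrightarrow> \<bar>v z\<bar> \<le> b"
  shows "\<bar>kernel_integral \<Omega> J \<delta> v x\<bar> \<le> b * calJ \<Omega> J \<delta> x"
proof -
  have "\<bar>kernel_integral \<Omega> J \<delta> v x\<bar> \<le> (\<integral>z. b * (indicator \<Omega> z * J (\<delta> x z)) \<partial>lborel)"
    unfolding kernel_integral_def
  proof (rule integral_abs_bound_integral)
    show "integrable lborel (\<lambda>z. indicator \<Omega> z * J (\<delta> x z) * v z)"
      using kernel_times_integrable[OF x v bound] .
    show "integrable lborel (\<lambda>z. b * (indicator \<Omega> z * J (\<delta> x z)))"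
      using kernel_integrable[OF x] by simp
    fix z
    have "0 \<le> indicator \<Omega> z * J (\<delta> x z)" using kernel_nonneg x closure_subset by blast
    then show "\<bar>indicator \<Omega> z * J (\<delta> x z) * v z\<bar> \<le> b * (indicator \<Omega> z * J (\<delta> x z))"
      using bound[of z] by (cases "z \<in> \<Omega>") (auto simp: abs_mult mult.commute intro: mult_right_mono)
  qed
  also have "\<dots> = b * calJ \<Omega> J \<delta> x"
    by (simp add: calJ_eq_kernel_integral[OF x] kernel_integral_def)
  finally show ?thesis .
qed

lemma kernel_integral_holder:
  assumes x: "x \<in> \<Omega>" and y: "y \<in> \<Omega>" and v: "continuous_on \<Omega> v"
    and bound: "\<And>z. z \<in> \<Omega> \<Longrightarrow> \<bar>v z\<bar> \<le> 1"
  shows "\<bar>kernel_integral \<Omega> J \<delta> v x - kernel_integral \<Omega> J \<delta> v y\<bar> \<le> C * dist x y powr \<alpha>"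
proof -
  let ?f = "\<lambda>z. indicator \<Omega> z * J (\<delta> x z) * v z - indicator \<Omega> z * J (\<delta> y z) * v z"
  have int: "integrable lborel (\<lambda>z. indicator \<Omega> z * J (\<delta> x z) * v z)"
    "integrable lborel (\<lambda>z. indicator \<Omega> z * J (\<delta> y z) * v z)"
    using kernel_times_integrable[OF _ v bound] x y by auto
  have "kernel_integral \<Omega> J \<delta> v x - kernel_integral \<Omega> J \<delta> v y = (\<integral>z. ?f z \<partial>lborel)"
    unfolding kernel_integral_def by (rule Bochner_Integration.integral_diff[OF int, symmetric])
  then have "ennreal \<bar>kernel_integral \<Omega> J \<delta> v x - kernel_integral \<Omega> J \<delta> v y\<bar>
      \<le> (\<integral>\<^sup>+z. norm (?f z) \<partial>lborel)"
    using integral_norm_bound_ennreal[of lborel ?f] int by simp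
  also have "\<dots> \<le> L1_diff \<Omega> J \<delta> x y"
    unfolding L1_diff_def
  proof (intro nn_integral_mono ennreal_leI)
    fix z
    show "norm (?f z) \<le> indicator \<Omega> z * \<bar>J (\<delta> x z) - J (\<delta> y z)\<bar>"
    proof (cases "z \<in> \<Omega>")
      case True
      then have "norm (?f z) = \<bar>J (\<delta> x z) - J (\<delta> y z)\<bar> * \<bar>v z\<bar>"
        by (simp add: left_diff_distrib[symmetric] abs_mult)
      with True bound[OF True] show ?thesis by (simp add: mult_left_le)
    qed simp
  qed
  also have "\<dots> \<le> ennreal (C * dist x y powr \<alpha>)" using L1_diff_le[OF x y] .
  finally show ?thesis
    using ennreal_le_iff[of "C * dist x y powr \<alpha>"] C_nonneg by simp
qed

lemma calJ_holder:
  "x \<in> \<Omega> \<Longrightarrow> y \<in> \<Omega> \<Longrightarrow> \<bar>calJ \<Omega> J \<delta> x - calJ \<Omega> J \<delta> y\<bar> \<le> C * dist x y powr \<alpha>"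
  using kernel_integral_holder[of x y "\<lambda>_. 1"] by (simp add: calJ_eq_kernel_integral)

lemma continuous_on_calJ: "continuous_on \<Omega> (calJ \<Omega> J \<delta>)"
  using calJ_holder alpha_pos by (rule holder_imp_continuous_on)

lemma calJ_le:
  assumes "x \<in> \<Omega>"
  shows "calJ \<Omega> J \<delta> x \<le> CJ"
proof (rule continuous_on_le_if_AE_le[OF _ open_domain continuous_on_calJ assms])
  show "AE x in lborel. x \<in> \<Omega> \<longrightarrow> calJ \<Omega> J \<delta> x \<le> CJ"
    using calJ_enn_AE_le by eventually_elim (use CJ_nonneg in \<open>auto simp: calJ_def enn2real_leI\<close>)
qed

lemma nl_op_eq_kernel_integral:
  assumes x: "x \<in> \<Omega>" and v: "continuous_on \<Omega> v" and bound: "\<And>z. z \<in> \<Omega> \<Longrightarrow> \<bar>v z\<bar> \<le> 1"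
  shows "nl_op \<Omega> J \<delta> v x = kernel_integral \<Omega> J \<delta> v x - v x * calJ \<Omega> J \<delta> x"
proof -
  have "nl_op \<Omega> J \<delta> v x
      = (\<integral>z. indicator \<Omega> z * J (\<delta> x z) * v z - v x * (indicator \<Omega> z * J (\<delta> x z)) \<partial>lborel)"
    unfolding nl_op_def set_lebesgue_integral_def
    by (intro Bochner_Integration.integral_cong) (auto simp: algebra_simps)
  also have "\<dots> = kernel_integral \<Omega> J \<delta> v x - v x * calJ \<Omega> J \<delta> x"
    using kernel_times_integrable[OF x v bound] kernel_integrable[OF x]
    by (simp add: kernel_integral_def calJ_eq_kernel_integral[OF x])
  finally show ?thesis .
qed

end

locale kernel_solution = besov_kernel \<Omega> J \<delta> \<alpha> C CJ
  for \<Omega> :: "'a::euclidean_space set" and J \<delta> \<alpha> C CJ +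
  fixes f f' :: "real \<Rightarrow> real" and t0 :: real and u u1 u2 :: "real \<Rightarrow> 'a \<Rightarrow> real"
  assumes f_deriv: "\<And>s. (f has_real_derivative f' s) (at s)"
    and C2: "C2_curve (closure \<Omega>) t0 u u1 u2"
    and equation_AE: "AE p in lborel. t0 < fst p \<and> snd p \<in> \<Omega> \<longrightarrow>
        u1 (fst p) (snd p) = nl_op \<Omega> J \<delta> (u (fst p)) (snd p) + f (u (fst p) (snd p))"
begin

lemma u_range: "t0 \<le> t \<Longrightarrow> x \<in> closure \<Omega> \<Longrightarrow> 0 \<le> u t x \<and> u t x \<le> 1"
  using C2 unfolding C2_curve_def by auto

lemma u_abs_le_1: "t0 \<le> t \<Longrightarrow> x \<in> \<Omega> \<Longrightarrow> \<bar>u t x\<bar> \<le> 1"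
  using u_range closure_subset by fastforce

lemma continuous_on_u: "t0 \<le> t \<Longrightarrow> continuous_on (closure \<Omega>) (u t)"
  and continuous_on_u1: "t0 \<le> t \<Longrightarrow> continuous_on (closure \<Omega>) (u1 t)"
  using C2 unfolding C2_curve_def Cb_def by auto

lemma continuous_on_u_domain: "t0 \<le> t \<Longrightarrow> continuous_on \<Omega> (u t)"
  and continuous_on_u1_domain: "t0 \<le> t \<Longrightarrow> continuous_on \<Omega> (u1 t)"
  using continuous_on_u continuous_on_u1 continuous_on_subset closure_subset by blast+

lemma u_has_derivative:
  "t0 \<le> t \<Longrightarrow> x \<in> closure \<Omega> \<Longrightarrow> ((\<lambda>s. u s x) has_real_derivative u1 t x) (at t within {t0..})"
  using C2 unfolding C2_curve_def Cb_def by (intro sup_has_deriv_imp_has_real_derivative) auto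

lemma locally_time_lipschitz_u: "locally_time_lipschitz t0 \<Omega> u"
  and locally_time_lipschitz_u1: "locally_time_lipschitz t0 \<Omega> u1"
proof -
  have "locally_time_lipschitz t0 (closure \<Omega>) u" "locally_time_lipschitz t0 (closure \<Omega>) u1"
    using C2 unfolding C2_curve_def Cb_def by (auto intro: sup_has_deriv_imp_locally_time_lipschitz)
  then show "locally_time_lipschitz t0 \<Omega> u" "locally_time_lipschitz t0 \<Omega> u1"
    using closure_subset locally_time_lipschitz_subset by blast+
qed

lemma kernel_integral_u_holder:
  "t0 \<le> t \<Longrightarrow> x \<in> \<Omega> \<Longrightarrow> y \<in> \<Omega> \<Longrightarrow>
    \<bar>kernel_integral \<Omega> J \<delta> (u t) x - kernel_integral \<Omega> J \<delta> (u t) y\<bar> \<le> C * dist x y powr \<alpha>"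
  using kernel_integral_holder continuous_on_u_domain u_abs_le_1 by blast

lemma locally_time_lipschitz_kernel_integral_u:
  "locally_time_lipschitz t0 \<Omega> (\<lambda>t. kernel_integral \<Omega> J \<delta> (u t))"
  unfolding locally_time_lipschitz_def
proof (intro allI impI)
  fix t assume t: "t0 \<le> t"
  obtain d B where dB: "d > 0" "\<And>s z. t0 \<le> s \<Longrightarrow> \<bar>s - t\<bar> < d \<Longrightarrow> z \<in> \<Omega> \<Longrightarrow> \<bar>u s z - u t z\<bar> \<le> B * \<bar>s - t\<bar>"
    using locally_time_lipschitz_u t unfolding locally_time_lipschitz_def by blast
  have "\<bar>kernel_integral \<Omega> J \<delta> (u s) x - kernel_integral \<Omega> J \<delta> (u t) x\<bar> \<le> (\<bar>B\<bar> * CJ) * \<bar>s - t\<bar>"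
    if s: "t0 \<le> s" "\<bar>s - t\<bar> < d" and x: "x \<in> \<Omega>" for s x
  proof -
    have diff_bound: "\<bar>u s z - u t z\<bar> \<le> \<bar>B\<bar> * \<bar>s - t\<bar>" if "z \<in> \<Omega>" for z
      using dB(2)[OF s that] abs_ge_self[of B] by (meson abs_ge_zero mult_right_mono order_trans)
    have "\<bar>kernel_integral \<Omega> J \<delta> (u s) x - kernel_integral \<Omega> J \<delta> (u t) x\<bar>
        = \<bar>kernel_integral \<Omega> J \<delta> (\<lambda>z. u s z - u t z) x\<bar>"
      using kernel_integral_diff[OF x continuous_on_u_domain[OF s(1)] u_abs_le_1[OF s(1)]
          continuous_on_u_domain[OF t] u_abs_le_1[OF t]] by simp
    also have "\<dots> \<le> (\<bar>B\<bar> * \<bar>s - t\<bar>) * calJ \<Omega> J \<delta> x"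
      using continuous_on_u_domain s(1) t diff_bound
      by (intro kernel_integral_abs_le[OF x]) (auto intro: continuous_on_diff)
    also have "\<dots> \<le> (\<bar>B\<bar> * \<bar>s - t\<bar>) * CJ"
      using calJ_le[OF x] by (intro mult_left_mono) auto
    finally show ?thesis by (simp add: algebra_simps)
  qed
  with dB(1) show "\<exists>d>0. \<exists>B. \<forall>s\<ge>t0. \<bar>s - t\<bar> < d \<longrightarrow> (\<forall>x\<in>\<Omega>.
      \<bar>kernel_integral \<Omega> J \<delta> (u s) x - kernel_integral \<Omega> J \<delta> (u t) x\<bar> \<le> B * \<bar>s - t\<bar>)"
    by blast
qed

definition residual :: "real \<Rightarrow> 'a \<Rightarrow> real" where
  "residual t x = u1 t x - (kernel_integral \<Omega> J \<delta> (u t) x - u t x * calJ \<Omega> J \<delta> x + f (u t x))"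

lemma continuous_on_residual: "continuous_on ({t0..} \<times> \<Omega>) (\<lambda>p. residual (fst p) (snd p))"
proof -
  have "continuous_on ({t0..} \<times> \<Omega>) (\<lambda>p. u (fst p) (snd p))"
    using continuous_on_u_domain locally_time_lipschitz_u
    by (rule continuous_on_Times_if_locally_time_lipschitz)
  moreover have "continuous_on ({t0..} \<times> \<Omega>) (\<lambda>p. u1 (fst p) (snd p))"
    using continuous_on_u1_domain locally_time_lipschitz_u1
    by (rule continuous_on_Times_if_locally_time_lipschitz)
  moreover have "continuous_on ({t0..} \<times> \<Omega>) (\<lambda>p. kernel_integral \<Omega> J \<delta> (u (fst p)) (snd p))"
    using holder_imp_continuous_on[OF kernel_integral_u_holder alpha_pos]
      locally_time_lipschitz_kernel_integral_u
    by (rule continuous_on_Times_if_locally_time_lipschitz)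
  moreover have "continuous_on ({t0..} \<times> \<Omega>) (\<lambda>p. calJ \<Omega> J \<delta> (snd p))"
    by (rule continuous_on_compose2[OF continuous_on_calJ continuous_on_snd]) auto
  moreover have "continuous_on UNIV f"
    using f_deriv by (intro continuous_at_imp_continuous_on ballI DERIV_isCont) auto
  ultimately show ?thesis
    unfolding residual_def
    by (intro continuous_intros) (auto intro: continuous_on_compose2[of UNIV f])
qed

lemma equation_everywhere:
  assumes t: "t0 \<le> t" and x: "x \<in> \<Omega>"
  shows "u1 t x = kernel_integral \<Omega> J \<delta> (u t) x - u t x * calJ \<Omega> J \<delta> x + f (u t x)"
proof -
  have "\<bar>residual (fst p) (snd p)\<bar> \<le> 0" if p: "p \<in> {t0<..} \<times> \<Omega>" for p
  proof (rule continuous_on_le_if_AE_le[OF _ _ _ p])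
    show "open ({t0<..} \<times> \<Omega>)" using open_domain by (intro open_Times) auto
    show "continuous_on ({t0<..} \<times> \<Omega>) (\<lambda>p. \<bar>residual (fst p) (snd p)\<bar>)"
      by (intro continuous_on_rabs continuous_on_subset[OF continuous_on_residual]) auto
    show "AE p in lborel. p \<in> {t0<..} \<times> \<Omega> \<longrightarrow> \<bar>residual (fst p) (snd p)\<bar> \<le> 0"
      using equation_AE
    proof eventually_elim
      case (elim p)
      then show ?case
        using nl_op_eq_kernel_integral[OF _ continuous_on_u_domain u_abs_le_1, of "snd p" "fst p"]
        by (auto simp: residual_def mem_Times_iff)
    qed
  qed
  then have interior: "\<bar>residual s x\<bar> \<le> 0" if "t0 < s" for s
    using that x by fastforce
  have "continuous_on {t0..} (\<lambda>s. residual (fst (s, x)) (snd (s, x)))"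
    by (rule continuous_on_compose2[OF continuous_on_residual]) (auto intro!: continuous_intros x)
  then have "continuous_on (closure {t0<..}) (\<lambda>s. \<bar>residual s x\<bar>)"
    by (simp add: continuous_on_rabs)
  then have "\<bar>residual t x\<bar> \<le> 0"
    by (rule continuous_le_on_closure) (use t interior in auto)
  then show ?thesis by (simp add: residual_def)
qed

lemma difference_equation:
  assumes t: "t0 \<le> t" and x: "x \<in> \<Omega>" and y: "y \<in> \<Omega>"
  obtains z where "z \<in> {0..1}"
    "u1 t x - u1 t y = (kernel_integral \<Omega> J \<delta> (u t) x - kernel_integral \<Omega> J \<delta> (u t) y)
       - calJ \<Omega> J \<delta> x * (u t x - u t y) - u t y * (calJ \<Omega> J \<delta> x - calJ \<Omega> J \<delta> y)
       + f' z * (u t x - u t y)"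
proof -
  obtain z where z: "z \<in> closed_segment (u t x) (u t y)" "f (u t x) - f (u t y) = f' z * (u t x - u t y)"
    using real_mvt_segment[OF f_deriv] by blast
  have segment: "closed_segment (u t x) (u t y) \<subseteq> {0..1}"
    using u_range[OF t] x y closure_subset by (intro closed_segment_subset) auto
  have eq: "u1 t x - u1 t y = (kernel_integral \<Omega> J \<delta> (u t) x - kernel_integral \<Omega> J \<delta> (u t) y)
       - calJ \<Omega> J \<delta> x * (u t x - u t y) - u t y * (calJ \<Omega> J \<delta> x - calJ \<Omega> J \<delta> y)
       + (f (u t x) - f (u t y))"
    using equation_everywhere[OF t x] equation_everywhere[OF t y] by algebra
  show ?thesis
  proof (rule that)
    show "z \<in> {0..1}" using z(1) segment by blast
  qed (simp only: eq z(2))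
qed

text \<open>The dissipation comes from \<open>-u \<cdot> calJ\<close>, which beats the largest growth rate of \<open>f\<close> by \<open>c\<close>.\<close>
lemma dissipation_estimate:
  assumes c: "c > 0" and gap: "\<And>x. x \<in> \<Omega> \<Longrightarrow> f' s0 + c \<le> calJ \<Omega> J \<delta> x"
    and max: "\<And>s. f' s \<le> f' s0"
    and t: "t0 \<le> t" and x: "x \<in> \<Omega>" and y: "y \<in> \<Omega>"
  shows "(u t x - u t y) * (u1 t x - u1 t y)
    \<le> \<bar>u t x - u t y\<bar> * (2 * C * dist x y powr \<alpha> - c * \<bar>u t x - u t y\<bar>)"
proof -
  define w where "w = u t x - u t y"
  define P where "P = dist x y powr \<alpha>"
  obtain z where z: "u1 t x - u1 t y = (kernel_integral \<Omega> J \<delta> (u t) x - kernel_integral \<Omega> J \<delta> (u t) y)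
       - calJ \<Omega> J \<delta> x * w - u t y * (calJ \<Omega> J \<delta> x - calJ \<Omega> J \<delta> y) + f' z * w"
    using difference_equation[OF t x y] unfolding w_def by blast
  have "w * (kernel_integral \<Omega> J \<delta> (u t) x - kernel_integral \<Omega> J \<delta> (u t) y) \<le> \<bar>w\<bar> * (C * P)"
  proof -
    have "\<bar>kernel_integral \<Omega> J \<delta> (u t) x - kernel_integral \<Omega> J \<delta> (u t) y\<bar> \<le> C * P"
      unfolding P_def by (rule kernel_integral_u_holder[OF t x y])
    then have "\<bar>w\<bar> * \<bar>kernel_integral \<Omega> J \<delta> (u t) x - kernel_integral \<Omega> J \<delta> (u t) y\<bar> \<le> \<bar>w\<bar> * (C * P)"
      by (rule mult_left_mono) simp
    then show ?thesis by (simp add: abs_mult[symmetric] abs_le_iff)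
  qed
  moreover have "- (w * (u t y * (calJ \<Omega> J \<delta> x - calJ \<Omega> J \<delta> y))) \<le> \<bar>w\<bar> * (C * P)"
  proof -
    have "\<bar>u t y\<bar> * \<bar>calJ \<Omega> J \<delta> x - calJ \<Omega> J \<delta> y\<bar> \<le> 1 * (C * P)"
      unfolding P_def using u_abs_le_1[OF t y] calJ_holder[OF x y] by (intro mult_mono) auto
    then have "\<bar>w\<bar> * (\<bar>u t y\<bar> * \<bar>calJ \<Omega> J \<delta> x - calJ \<Omega> J \<delta> y\<bar>) \<le> \<bar>w\<bar> * (C * P)"
      by (intro mult_left_mono) auto
    then show ?thesis by (simp add: abs_mult[symmetric] abs_le_iff)
  qed
  moreover have "f' z * (w * w) \<le> calJ \<Omega> J \<delta> x * (w * w) - c * (\<bar>w\<bar> * \<bar>w\<bar>)"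
  proof -
    have "f' z * (w * w) \<le> (calJ \<Omega> J \<delta> x - c) * (w * w)"
      using max[of z] gap[OF x] by (intro mult_right_mono) auto
    then show ?thesis by (simp add: left_diff_distrib abs_mult[symmetric])
  qed
  moreover have "w * (u1 t x - u1 t y) = w * (kernel_integral \<Omega> J \<delta> (u t) x - kernel_integral \<Omega> J \<delta> (u t) y)
      - calJ \<Omega> J \<delta> x * (w * w) - w * (u t y * (calJ \<Omega> J \<delta> x - calJ \<Omega> J \<delta> y)) + f' z * (w * w)"
    using z by algebra
  moreover have "\<bar>w\<bar> * (2 * C * P - c * \<bar>w\<bar>) = 2 * (\<bar>w\<bar> * (C * P)) - c * (\<bar>w\<bar> * \<bar>w\<bar>)"
    by algebra
  ultimately show ?thesis
    unfolding w_def[symmetric] P_def[symmetric] by linarith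
qed

lemma u_holder:
  assumes c: "c > 0" and gap: "\<And>x. x \<in> \<Omega> \<Longrightarrow> f' s0 + c \<le> calJ \<Omega> J \<delta> x"
    and max: "\<And>s. f' s \<le> f' s0"
    and H: "H \<ge> 0" and init: "\<And>x y. x \<in> \<Omega> \<Longrightarrow> y \<in> \<Omega> \<Longrightarrow> \<bar>u t0 x - u t0 y\<bar> \<le> H * dist x y powr \<alpha>"
    and t: "t0 \<le> t" and x: "x \<in> \<Omega>" and y: "y \<in> \<Omega>"
  shows "\<bar>u t x - u t y\<bar> \<le> (H + 2 * C / c) * dist x y powr \<alpha>"
proof (rule abs_le_barrier[where w="\<lambda>t. u t x - u t y" and w'="\<lambda>t. u1 t x - u1 t y", OF _ _ _ t])
  let ?P = "dist x y powr \<alpha>"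
  have "c * ((H + 2 * C / c) * ?P) = c * H * ?P + 2 * C * ?P"
    using c by (simp add: field_simps)
  moreover have "0 \<le> c * H * ?P" using c H by simp
  ultimately have bound_ge: "2 * C * ?P \<le> c * ((H + 2 * C / c) * ?P)" by linarith
  show "((\<lambda>t. u t x - u t y) has_real_derivative u1 s x - u1 s y) (at s within {t0..})" if "t0 \<le> s" for s
    using x y closure_subset by (intro DERIV_diff u_has_derivative[OF that]) auto
  show "\<bar>u t0 x - u t0 y\<bar> \<le> (H + 2 * C / c) * ?P"
  proof -
    have "H * ?P \<le> (H + 2 * C / c) * ?P"
      using c C_nonneg by (intro mult_right_mono) auto
    with init[OF x y] show ?thesis by linarith
  qed
  show "(u s x - u s y) * (u1 s x - u1 s y) < 0" if s: "t0 < s" and big: "(H + 2 * C / c) * ?P < \<bar>u s x - u s y\<bar>" for s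
  proof -
    have "0 \<le> (H + 2 * C / c) * ?P" using c C_nonneg H by simp
    then have "0 < \<bar>u s x - u s y\<bar>" using big by linarith
    moreover have "c * ((H + 2 * C / c) * ?P) < c * \<bar>u s x - u s y\<bar>"
      using big c by (rule mult_strict_left_mono)
    then have "2 * C * ?P - c * \<bar>u s x - u s y\<bar> < 0" using bound_ge by linarith
    ultimately have "\<bar>u s x - u s y\<bar> * (2 * C * ?P - c * \<bar>u s x - u s y\<bar>) < 0"
      by (rule mult_pos_neg)
    then show ?thesis
      using dissipation_estimate[OF c gap max _ x y, of s] s by linarith
  qed
qed

lemma u1_holder:
  assumes f'_bound: "\<And>s. s \<in> {0..1} \<Longrightarrow> \<bar>f' s\<bar> \<le> Bf"
    and u_holder: "\<And>x y. x \<in> \<Omega> \<Longrightarrow> y \<in> \<Omega> \<Longrightarrow> \<bar>u t x - u t y\<bar> \<le> M * dist x y powr \<alpha>"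
    and t: "t0 \<le> t" and x: "x \<in> \<Omega>" and y: "y \<in> \<Omega>"
  shows "\<bar>u1 t x - u1 t y\<bar> \<le> (2 * C + (CJ + Bf) * M) * dist x y powr \<alpha>"
proof -
  define w where "w = u t x - u t y"
  define P where "P = dist x y powr \<alpha>"
  obtain z where z: "z \<in> {0..1}"
    "u1 t x - u1 t y = (kernel_integral \<Omega> J \<delta> (u t) x - kernel_integral \<Omega> J \<delta> (u t) y)
       - calJ \<Omega> J \<delta> x * w - u t y * (calJ \<Omega> J \<delta> x - calJ \<Omega> J \<delta> y) + f' z * w"
    using difference_equation[OF t x y] unfolding w_def by blast
  have w: "\<bar>w\<bar> \<le> M * P" using u_holder[OF x y] unfolding w_def P_def .
  have "\<bar>calJ \<Omega> J \<delta> x * w\<bar> \<le> CJ * (M * P)"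
    unfolding abs_mult using calJ_le[OF x] calJ_nonneg[of \<Omega> J \<delta> x] w CJ_nonneg
    by (intro mult_mono) auto
  moreover have "\<bar>u t y * (calJ \<Omega> J \<delta> x - calJ \<Omega> J \<delta> y)\<bar> \<le> 1 * (C * P)"
    unfolding abs_mult P_def using u_abs_le_1[OF t y] calJ_holder[OF x y] by (intro mult_mono) auto
  moreover have "\<bar>f' z * w\<bar> \<le> Bf * (M * P)"
    unfolding abs_mult using f'_bound[OF z(1)] w by (intro mult_mono) auto
  moreover have "\<bar>kernel_integral \<Omega> J \<delta> (u t) x - kernel_integral \<Omega> J \<delta> (u t) y\<bar> \<le> C * P"
    unfolding P_def by (rule kernel_integral_u_holder[OF t x y])
  ultimately have "\<bar>u1 t x - u1 t y\<bar> \<le> C * P + CJ * (M * P) + 1 * (C * P) + Bf * (M * P)"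
    unfolding z(2) by linarith
  also have "\<dots> = (2 * C + (CJ + Bf) * M) * P" by algebra
  finally show ?thesis unfolding P_def .
qed

lemma holder_seminorms_bounded:
  assumes c: "c > 0" and gap: "\<And>x. x \<in> \<Omega> \<Longrightarrow> f' s0 + c \<le> calJ \<Omega> J \<delta> x"
    and max: "\<And>s. f' s \<le> f' s0" and f'_bound: "\<And>s. s \<in> {0..1} \<Longrightarrow> \<bar>f' s\<bar> \<le> Bf"
    and H: "H \<ge> 0" and init: "\<And>x y. x \<in> \<Omega> \<Longrightarrow> y \<in> \<Omega> \<Longrightarrow> \<bar>u t0 x - u t0 y\<bar> \<le> H * dist x y powr \<alpha>"
  shows "(SUP t\<in>{t0..}. holder_semi \<alpha> (closure \<Omega>) (u t) + holder_semi \<alpha> (closure \<Omega>) (u1 t))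
    \<le> ereal ((H + 2 * C / c) + (2 * C + (CJ + Bf) * (H + 2 * C / c)))"
proof (rule SUP_least)
  fix t assume "t \<in> {t0..}"
  then have t: "t0 \<le> t" by simp
  note u_bound = u_holder[OF c gap max H init t]
  have "holder_semi \<alpha> (closure \<Omega>) (u t) \<le> ereal (H + 2 * C / c)"
    using continuous_on_u[OF t] u_bound alpha_pos by (rule holder_semi_closure_le)
  moreover have "holder_semi \<alpha> (closure \<Omega>) (u1 t) \<le> ereal (2 * C + (CJ + Bf) * (H + 2 * C / c))"
    using continuous_on_u1[OF t] u1_holder[OF f'_bound u_bound t] alpha_pos by (rule holder_semi_closure_le)
  ultimately show "holder_semi \<alpha> (closure \<Omega>) (u t) + holder_semi \<alpha> (closure \<Omega>) (u1 t)
      \<le> ereal ((H + 2 * C / c) + (2 * C + (CJ + Bf) * (H + 2 * C / c)))"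
    using add_mono by fastforce
qed

end

lemma besov_B_imp_L1_diff_le:
  assumes "besov_B \<alpha> \<Omega> \<delta> J"
  obtains C where "0 \<le> C"
    "\<And>y z. y \<in> \<Omega> \<Longrightarrow> z \<in> \<Omega> \<Longrightarrow> L1_diff \<Omega> J \<delta> y z \<le> ennreal (C * dist y z powr \<alpha>)"
proof -
  obtain C0 where C0: "\<forall>y\<in>\<Omega>. \<forall>z\<in>\<Omega>. y \<noteq> z \<longrightarrow> L1_diff \<Omega> J \<delta> y z \<le> ennreal (C0 * dist y z powr \<alpha>)"
    using assms unfolding besov_B_def by blast
  show ?thesis
  proof (rule that[of "max C0 0"])
    fix y z assume yz: "y \<in> \<Omega>" "z \<in> \<Omega>"
    show "L1_diff \<Omega> J \<delta> y z \<le> ennreal (max C0 0 * dist y z powr \<alpha>)"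
    proof (cases "y = z")
      case False
      have "ennreal (C0 * dist y z powr \<alpha>) \<le> ennreal (max C0 0 * dist y z powr \<alpha>)"
        by (intro ennreal_leI mult_right_mono) auto
      with C0 yz False show ?thesis by (meson order_trans)
    qed (simp add: L1_diff_def)
  qed simp
qed

theorem proposition3p4:
  fixes K :: "'a::euclidean_space set"
    and \<delta> :: "'a \<Rightarrow> 'a \<Rightarrow> real"
    and J :: "real \<Rightarrow> real"
    and f' :: "real \<Rightarrow> real"
    and \<alpha> M0 H :: real
  assumes "compact K"
    and "connected (- K)"
    and "quasi_euclidean (closure (- K)) \<delta>"
    and "assumption_AJ (- K) J \<delta>"
    and "continuous_on UNIV f'"
    and "\<exists>s0. (\<forall>s. f' s \<le> f' s0) \<and> f' s0 < (INF x\<in>- K. calJ (- K) J \<delta> x)"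
    and "0 < \<alpha>" and "\<alpha> < 1"
    and "besov_B \<alpha> (- K) \<delta> J"
    and "0 < M0"
  shows "\<exists>M>0. \<forall>f t0 u0 u u1 u2.
     (\<forall>s. (f has_real_derivative f' s) (at s)) \<and> (\<exists>Lf. lipschitz_on Lf UNIV f) \<and>
     holder_space \<alpha> (closure (- K)) u0 \<and> holder_semi \<alpha> (closure (- K)) u0 = ereal H \<and>
     C2_curve (closure (- K)) t0 u u1 u2 \<and>
     (AE p in lborel. fst p > t0 \<and> snd p \<in> - K \<longrightarrow>
        u1 (fst p) (snd p) = nl_op (- K) J \<delta> (u (fst p)) (snd p) + f (u (fst p) (snd p))) \<and>
     (\<forall>x\<in>closure (- K). u t0 x = u0 x) \<and>
     (\<forall>t\<ge>t0. \<forall>x\<in>closure (- K). \<bar>u t x\<bar> \<le> M0)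
     \<longrightarrow> (SUP t\<in>{t0..}. holder_semi \<alpha> (closure (- K)) (u t) + holder_semi \<alpha> (closure (- K)) (u1 t)) \<le> ereal M"
proof -
  obtain C where C: "0 \<le> C"
    "\<And>y z. y \<in> - K \<Longrightarrow> z \<in> - K \<Longrightarrow> L1_diff (- K) J \<delta> y z \<le> ennreal (C * dist y z powr \<alpha>)"
    using besov_B_imp_L1_diff_le[OF assms(9)] by blast
  obtain CJ0 where CJ0: "AE x in lborel. x \<in> - K \<longrightarrow> calJ_enn (- K) J \<delta> x \<le> ennreal CJ0"
    using assms(4) unfolding assumption_AJ_def by blast
  define CJ where "CJ = max CJ0 0"
  interpret besov_kernel "- K" J \<delta> \<alpha> C CJ
  proof
    show "AE x in lborel. x \<in> - K \<longrightarrow> calJ_enn (- K) J \<delta> x \<le> ennreal CJ"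
      using CJ0 by eventually_elim (auto simp: CJ_def intro: order_trans ennreal_leI)
  qed (use assms(1,3,4,7) C radial_integrable_imp_borel_measurable_abs in
      \<open>auto simp: CJ_def assumption_AJ_def compact_imp_closed open_Compl\<close>)
  obtain s0 where max: "\<And>s. f' s \<le> f' s0" and below: "f' s0 < (INF x\<in>- K. calJ (- K) J \<delta> x)"
    using assms(6) by blast
  define c where "c = (INF x\<in>- K. calJ (- K) J \<delta> x) - f' s0"
  have c: "c > 0" using below by (simp add: c_def)
  have "bdd_below (calJ (- K) J \<delta> ` (- K))"
    by (rule bdd_belowI2[where m=0]) (rule calJ_nonneg)
  then have gap: "f' s0 + c \<le> calJ (- K) J \<delta> x" if "x \<in> - K" for x
    using cINF_lower[OF _ that] unfolding c_def by simp
  obtain Bf where Bf: "\<And>s. s \<in> {0..1} \<Longrightarrow> \<bar>f' s\<bar> \<le> Bf"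
    using compact_imp_bounded[OF compact_continuous_image[OF continuous_on_subset[OF assms(5)]]]
    unfolding bounded_real by (metis compact_Icc image_eqI subset_UNIV)
  define M1 where "M1 = max H 0 + 2 * C / c"
  define M where "M = max (M1 + (2 * C + (CJ + Bf) * M1)) 1"
  show ?thesis
    apply (intro exI[of _ M] conjI allI impI; (elim conjE)?)
    subgoal by (simp add: M_def)
    subgoal premises hyp for f t0 u0 u u1 u2
    proof -
      interpret kernel_solution "- K" J \<delta> \<alpha> C CJ f f' t0 u u1 u2
        using hyp(1,5,6) by unfold_locales auto
      have "holder_semi \<alpha> (closure (- K)) u0 \<le> ereal (max H 0)" using hyp(4) by simp
      then have init: "\<bar>u t0 x - u t0 y\<bar> \<le> max H 0 * dist x y powr \<alpha>" if "x \<in> - K" "y \<in> - K" for x y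
        using holder_semi_leD hyp(7) that closure_subset by (metis subsetD)
      have "(SUP t\<in>{t0..}. holder_semi \<alpha> (closure (- K)) (u t) + holder_semi \<alpha> (closure (- K)) (u1 t))
          \<le> ereal (M1 + (2 * C + (CJ + Bf) * M1))"
        unfolding M1_def using holder_seminorms_bounded[OF c gap max Bf _ init] by simp
      also have "\<dots> \<le> ereal M" by (simp add: M_def)
      finally show ?thesis .
    qed
    done
qed

end
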